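(* Let $\mu>0$ and let $\psi:(0,\infty)\times\mathbb T\to\mathbb R$ be such that $\psi_\beta$ exists and is $C^1$ on $(0,\infty)\times\mathbb T$, there are constants $0<m\le M$ with $-M\beta^{-2\mu}\le\psi_\beta(\beta,\phi)\le-m\beta^{-2\mu}$ for all $(\beta,\phi)$, and $\psi_{\beta\varphi}:=(\partial_\phi-\partial_\beta)\psi_\beta<0$ everywhere. Define $A(\beta,\phi)=(a(\beta,\phi),\beta+\phi)\in\mathbb R\times\mathbb T$ with $a=\frac12\log(-\psi_\beta/\mu)$, and $B(a,\theta)=(e^a\cos\theta,e^a\sin\theta)$. Then $T=B\circ A$ is a $C^1$-diffeomorphism from $(0,\infty)\times\mathbb T$ onto $\mathbb R^2\setminus\{0\}$.
   Context: $\mathbb T=\mathbb R/2\pi\mathbb Z$. *)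

theory Defs
  imports "HOL-Analysis.Analysis"
begin

definition C1_on :: "'a::real_normed_vector set \<Rightarrow> ('a \<Rightarrow> 'b::real_normed_vector) \<Rightarrow> bool" where
  "C1_on S f \<longleftrightarrow> (\<exists>f'. (\<forall>x\<in>S. (f has_derivative blinfun_apply (f' x)) (at x)) \<and> continuous_on S f')"

text \<open>The map T = B o A, with phi lifted from the circle R/2piZ to R.\<close>
definition Tmap :: "real \<Rightarrow> (real \<Rightarrow> real \<Rightarrow> real) \<Rightarrow> real \<times> real \<Rightarrow> real \<times> real" where
  "Tmap \<mu> psib = (\<lambda>(b, p). let a = ln (- psib b p / \<mu>) / 2
      in (exp a * cos (b + p), exp a * sin (b + p)))"

end

theory Submission
  imports Defs
begin

text \<open>
  In polar coordinates T has radius sqrt (- psi_beta / mu) and angle beta + phi. On each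
  antidiagonal beta + phi = theta the function beta \<mapsto> psi_beta (beta, theta - beta) has derivative
  - psi_beta_phi > 0, and by the power-law bounds it takes every negative value; so each point
  of the ray of angle theta is hit exactly once, up to the 2 pi-periodicity in phi. The Jacobian
  determinant of T is psi_beta_phi / (2 mu) \<noteq> 0, and the inverse function theorem gives
  C1 local inverses.
\<close>

section \<open>Linear maps of the plane given by their columns\<close>

definition blinfun_of_columns :: "real \<times> real \<Rightarrow> real \<times> real \<Rightarrow> (real \<times> real) \<Rightarrow>\<^sub>L (real \<times> real)" where
  "blinfun_of_columns u v = Blinfun (\<lambda>h. fst h *\<^sub>R u + snd h *\<^sub>R v)"

lemma blinfun_of_columns_apply [simp]: "blinfun_of_columns u v h = fst h *\<^sub>R u + snd h *\<^sub>R v"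
proof -
  have "bounded_linear (\<lambda>h::real \<times> real. fst h *\<^sub>R u + snd h *\<^sub>R v)"
    by (intro bounded_linear_intros)
  then show ?thesis
    by (simp add: blinfun_of_columns_def bounded_linear_Blinfun_apply)
qed

lemma continuous_on_blinfun_of_columns [continuous_intros]:
  fixes S :: "'a::t2_space set"
  assumes "continuous_on S u" "continuous_on S v"
  shows "continuous_on S (\<lambda>x. blinfun_of_columns (u x) (v x))"
proof -
  have "(Basis :: (real \<times> real) set) = {(1, 0), (0, 1)}"
    by (auto simp: Basis_prod_def)
  then show ?thesis
    using assms by (intro continuous_on_blinfun_componentwise) (auto intro!: continuous_intros)
qed

lemma linear_pair_expansion:
  fixes L :: "real \<times> real \<Rightarrow> 'a::real_vector"
  assumes "linear L"
  shows "L h = fst h *\<^sub>R L (1, 0) + snd h *\<^sub>R L (0, 1)"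
proof -
  have "L h = L (fst h *\<^sub>R (1, 0) + snd h *\<^sub>R (0, 1))" by simp
  also have "\<dots> = fst h *\<^sub>R L (1, 0) + snd h *\<^sub>R L (0, 1)"
    by (simp only: linear_add[OF assms] linear_scale[OF assms])
  finally show ?thesis .
qed

lemma has_derivative_blinfun_of_columns:
  assumes "(f has_derivative f') F"
  shows "(f has_derivative blinfun_apply (blinfun_of_columns (f' (1, 0)) (f' (0, 1)))) F"
  using assms
proof (rule has_derivative_eq_rhs)
  show "f' = blinfun_of_columns (f' (1, 0)) (f' (0, 1))"
    by (rule ext, subst linear_pair_expansion[OF has_derivative_linear[OF assms]]) simp
qed

definition det_columns :: "real \<times> real \<Rightarrow> real \<times> real \<Rightarrow> real" where
  "det_columns u v = fst u * snd v - snd u * fst v"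

definition inv_columns :: "real \<times> real \<Rightarrow> real \<times> real \<Rightarrow> (real \<times> real) \<Rightarrow>\<^sub>L (real \<times> real)" where
  "inv_columns u v = blinfun_of_columns
     (snd v / det_columns u v, - snd u / det_columns u v)
     (- fst v / det_columns u v, fst u / det_columns u v)"

lemma inv_columns_left:
  "det_columns u v \<noteq> 0 \<Longrightarrow> inv_columns u v (blinfun_of_columns u v h) = h"
  by (cases u; cases v; cases h)
     (simp add: inv_columns_def det_columns_def divide_simps, simp add: algebra_simps)

lemma inv_columns_right:
  "det_columns u v \<noteq> 0 \<Longrightarrow> blinfun_of_columns u v (inv_columns u v h) = h"
  by (cases u; cases v; cases h)
     (simp add: inv_columns_def det_columns_def divide_simps, simp add: algebra_simps)

lemma inv_columns_compose:
  "det_columns u v \<noteq> 0 \<Longrightarrow> inv_columns u v o\<^sub>L blinfun_of_columns u v = id_blinfun"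
  by (rule blinfun_eqI) (metis inv_columns_left blinfun_apply_blinfun_compose blinfun_apply_id_blinfun)

lemma inv_blinfun_of_columns:
  "det_columns u v \<noteq> 0 \<Longrightarrow> inv (blinfun_of_columns u v) = inv_columns u v"
  by (rule inv_unique_comp) (simp_all add: fun_eq_iff inv_columns_left inv_columns_right del: blinfun_of_columns_apply)

lemma continuous_on_inv_columns [continuous_intros]:
  fixes S :: "'a::t2_space set"
  assumes "continuous_on S u" "continuous_on S v" "\<And>x. x \<in> S \<Longrightarrow> det_columns (u x) (v x) \<noteq> 0"
  shows "continuous_on S (\<lambda>x. inv_columns (u x) (v x))"
  using assms unfolding inv_columns_def det_columns_def
  by (intro continuous_intros) auto

lemma C1_local_inverse_plane:
  fixes f :: "real \<times> real \<Rightarrow> real \<times> real"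
  assumes "open S" "x0 \<in> S"
    and der: "\<And>x. x \<in> S \<Longrightarrow> (f has_derivative blinfun_of_columns (u x) (v x)) (at x)"
    and cont: "continuous_on S u" "continuous_on S v"
    and det: "\<And>x. x \<in> S \<Longrightarrow> det_columns (u x) (v x) \<noteq> 0"
  obtains V g where "open V" "f x0 \<in> V" "V \<subseteq> f ` S" "C1_on V g" "g ` V \<subseteq> S"
    "\<And>w. w \<in> V \<Longrightarrow> f (g w) = w"
proof -
  obtain U V g g' where "open V" "U \<subseteq> S" "f x0 \<in> V" and hom: "homeomorphism U V f g"
    and g_der: "\<And>y. y \<in> V \<Longrightarrow> (g has_derivative g' y) (at y)"
    and g'_eq: "\<And>y. y \<in> V \<Longrightarrow> g' y = inv (blinfun_of_columns (u (g y)) (v (g y)))"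
    by (rule inverse_function_theorem[OF \<open>open S\<close> der _ \<open>x0 \<in> S\<close>
          inv_columns_compose[OF det[OF \<open>x0 \<in> S\<close>]]])
       (use cont in \<open>auto intro!: continuous_intros\<close>)
  have gV: "g ` V \<subseteq> S" and fg: "\<And>w. w \<in> V \<Longrightarrow> f (g w) = w" and "V \<subseteq> f ` S"
    and g_cont: "continuous_on V g"
    using hom \<open>U \<subseteq> S\<close> by (auto simp: homeomorphism_def)
  have "C1_on V g"
    unfolding C1_on_def
  proof (intro exI conjI ballI)
    fix y assume "y \<in> V"
    moreover have "g y \<in> S" using gV \<open>y \<in> V\<close> by blast
    ultimately show "(g has_derivative inv_columns (u (g y)) (v (g y))) (at y)"
      using g_der g'_eq inv_blinfun_of_columns[OF det] by metis
  next
    show "continuous_on V (\<lambda>y. inv_columns (u (g y)) (v (g y)))"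
      using gV det by (intro continuous_on_inv_columns continuous_on_compose2[OF cont(1) g_cont]
          continuous_on_compose2[OF cont(2) g_cont]) blast+
  qed
  then show thesis
    using that \<open>open V\<close> \<open>f x0 \<in> V\<close> \<open>V \<subseteq> f ` S\<close> gV fg by blast
qed

section \<open>Polar coordinates\<close>

text \<open>The differential of (r, t) \<mapsto> (r cos t, r sin t) at (r, t), applied to (a, b).\<close>
definition polar_differential :: "real \<Rightarrow> real \<Rightarrow> real \<Rightarrow> real \<Rightarrow> real \<times> real" where
  "polar_differential r t a b = (a * cos t - r * b * sin t, a * sin t + r * b * cos t)"

lemma has_derivative_polar:
  assumes "(\<rho> has_derivative \<rho>') (at x)" "(\<theta> has_derivative \<theta>') (at x)"
  shows "((\<lambda>x. (\<rho> x * cos (\<theta> x), \<rho> x * sin (\<theta> x))) has_derivative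
           (\<lambda>h. polar_differential (\<rho> x) (\<theta> x) (\<rho>' h) (\<theta>' h))) (at x)"
  using assms
  by (auto intro!: derivative_eq_intros simp: polar_differential_def algebra_simps)

lemma det_polar_differential:
  "det_columns (polar_differential r t a1 b1) (polar_differential r t a2 b2) = r * (a1 * b2 - a2 * b1)"
proof -
  have "det_columns (polar_differential r t a1 b1) (polar_differential r t a2 b2)
      = r * (a1 * b2 - a2 * b1) * ((sin t)\<^sup>2 + (cos t)\<^sup>2)"
    unfolding det_columns_def polar_differential_def fst_conv snd_conv power2_eq_square by algebra
  then show ?thesis by simp
qed

lemma polar_eq_iff:
  fixes r1 r2 t1 t2 :: real
  assumes "r1 > 0" "r2 > 0"
  shows "(r1 * cos t1, r1 * sin t1) = (r2 * cos t2, r2 * sin t2)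
    \<longleftrightarrow> r1 = r2 \<and> (\<exists>k::int. t1 = t2 + 2 * pi * k)"
proof
  assume eq: "(r1 * cos t1, r1 * sin t1) = (r2 * cos t2, r2 * sin t2)"
  have norm: "(r * cos t)\<^sup>2 + (r * sin t)\<^sup>2 = r\<^sup>2" for r t :: real
    by (simp add: power_mult_distrib flip: distrib_left)
  have "r1\<^sup>2 = r2\<^sup>2" using eq norm[of r1 t1] norm[of r2 t2] by simp
  then have "r1 = r2" using assms by (simp add: power2_eq_iff_nonneg)
  moreover have "sin t1 = sin t2 \<and> cos t1 = cos t2" using eq calculation assms by auto
  ultimately show "r1 = r2 \<and> (\<exists>k::int. t1 = t2 + 2 * pi * k)"
    using sin_cos_eq_iff by blast
next
  assume "r1 = r2 \<and> (\<exists>k::int. t1 = t2 + 2 * pi * k)"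
  then show "(r1 * cos t1, r1 * sin t1) = (r2 * cos t2, r2 * sin t2)"
    using sin_cos_eq_iff by metis
qed

lemma polar_eq_zero_iff: "(r * cos t, r * sin t) = 0 \<longleftrightarrow> r = (0::real)"
proof
  assume "(r * cos t, r * sin t) = 0"
  then have "r * cos t = 0" "r * sin t = 0" by (simp_all add: zero_prod_def)
  moreover have "r = cos t * (r * cos t) + sin t * (r * sin t)"
    using sin_cos_squared_add[of t] by (simp add: power2_eq_square algebra_simps flip: distrib_left)
  ultimately show "r = 0" by (metis add.right_neutral mult_zero_right)
qed (simp add: zero_prod_def)

lemma polar_exists:
  fixes z :: "real \<times> real"
  assumes "z \<noteq> 0"
  obtains r t where "r > 0" "z = (r * cos t, r * sin t)"
proof
  let ?w = "Complex (fst z) (snd z)"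
  show "cmod ?w > 0" using assms by (auto simp: prod_eq_iff complex_eq_iff)
  show "z = (cmod ?w * cos (Arg ?w), cmod ?w * sin (Arg ?w))"
    by (metis Re_rcis Im_rcis complex.sel prod.collapse rcis_cmod_Arg)
qed

abbreviation half_plane :: "(real \<times> real) set" where
  "half_plane \<equiv> {0<..} \<times> UNIV"

lemma open_half_plane: "open half_plane"
  by (intro open_Times) auto

lemma antidiagonal_strict_mono:
  fixes F :: "real \<times> real \<Rightarrow> real"
  assumes der: "\<And>x. x \<in> half_plane \<Longrightarrow> (F has_derivative F' x) (at x)"
    and neg: "\<And>x. x \<in> half_plane \<Longrightarrow> F' x (-1, 1) < 0"
  shows "strict_mono_on {0<..} (\<lambda>t. F (t, c - t))"
proof (rule strict_mono_onI)
  have deriv: "((\<lambda>t. F (t, c - t)) has_real_derivative - F' (t, c - t) (-1, 1)) (at t)"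
    if "t > 0" for t
  proof -
    have F_der: "(F has_derivative F' (t, c - t)) (at (t, c - t))"
      using der that by simp
    have "((\<lambda>t. (t, c - t)) has_derivative (\<lambda>h. (h, - h))) (at t)"
      by (auto intro!: derivative_eq_intros)
    then have "((\<lambda>t. F (t, c - t)) has_derivative (\<lambda>h. F' (t, c - t) (h, - h))) (at t)"
      using F_der by (rule has_derivative_compose)
    then show ?thesis
    proof (rule has_derivative_imp_has_field_derivative)
      show "h * - F' (t, c - t) (-1, 1) = F' (t, c - t) (h, - h)" for h
        using linear_scale[OF has_derivative_linear[OF F_der], of "- h" "(-1, 1)"] by simp
    qed
  qed
  fix s t :: real assume "s \<in> {0<..}" "s < t"
  show "F (s, c - s) < F (t, c - t)"
  proof (rule DERIV_pos_imp_increasing[OF \<open>s < t\<close>])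
    fix x assume "s \<le> x" "x \<le> t"
    then have "x > 0" using \<open>s \<in> {0<..}\<close> by simp
    then have "F' (x, c - x) (-1, 1) < 0" using neg by simp
    then show "\<exists>y. ((\<lambda>t. F (t, c - t)) has_real_derivative y) (at x) \<and> y > 0"
      using deriv[OF \<open>x > 0\<close>] by (intro exI[of _ "- F' (x, c - x) (-1, 1)"] conjI) simp_all
  qed
qed

lemma partial_derivative_periodic:
  fixes f f' :: "real \<Rightarrow> real \<Rightarrow> real"
  assumes per: "\<And>t p. t > 0 \<Longrightarrow> f t (p + c) = f t p"
    and der: "\<And>t p. t > 0 \<Longrightarrow> ((\<lambda>t. f t p) has_real_derivative f' t p) (at t)"
    and "b > 0"
  shows "f' b (p + c) = f' b p"
proof -
  have "((\<lambda>t. f t p) has_real_derivative f' b (p + c)) (at b)"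
    by (rule has_field_derivative_transform_within_open[OF der[of b "p + c"], where S="{0<..}"])
       (use assms in auto)
  then show ?thesis using der[OF \<open>b > 0\<close>] DERIV_unique by blast
qed

section \<open>The map T\<close>

locale twist_coordinates =
  fixes \<mu> m M :: real and psib :: "real \<Rightarrow> real \<Rightarrow> real"
    and D :: "real \<times> real \<Rightarrow> (real \<times> real) \<Rightarrow>\<^sub>L real"
  assumes mu_pos: "\<mu> > 0"
    and psib_periodic: "\<And>b p. b > 0 \<Longrightarrow> psib b (p + 2 * pi) = psib b p"
    and psib_has_derivative: "\<And>x. x \<in> half_plane \<Longrightarrow> (case_prod psib has_derivative D x) (at x)"
    and D_continuous: "continuous_on half_plane D"
    and mM: "0 < m" "m \<le> M"
    and bounds: "\<And>b p. b > 0 \<Longrightarrow>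
         - M * b powr (- 2 * \<mu>) \<le> psib b p \<and> psib b p \<le> - m * b powr (- 2 * \<mu>)"
    and mixed_neg: "\<And>x. x \<in> half_plane \<Longrightarrow> D x (-1, 1) < 0"
begin

lemma psib_neg:
  assumes "b > 0"
  shows "psib b p < 0"
proof -
  have "- m * b powr (- 2 * \<mu>) < 0" using assms mM by simp
  then show ?thesis using bounds[OF assms, of p] by linarith
qed

lemma psib_periodic_int: "b > 0 \<Longrightarrow> psib b (p + 2 * pi * of_int k) = psib b p"
proof -
  assume "b > 0"
  then interpret periodic_fun_simple "psib b" "2 * pi"
    by unfold_locales (rule psib_periodic)
  show ?thesis using plus_of_int[of p k] by (simp add: mult.commute)
qed

lemma psib_antidiagonal_strict_mono: "strict_mono_on {0<..} (\<lambda>t. psib t (c - t))"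
  using antidiagonal_strict_mono[OF psib_has_derivative mixed_neg] by simp

lemma continuous_on_psib: "continuous_on half_plane (case_prod psib)"
  by (intro continuous_at_imp_continuous_on ballI has_derivative_continuous[OF psib_has_derivative])

lemma psib_antidiagonal_attains:
  assumes "c > 0"
  obtains t where "t > 0" "psib t (\<theta> - t) = - c"
proof -
  \<comment> \<open>the barriers - m t powr (- 2 \<mu>) and - M t powr (- 2 \<mu>) equal - c at t1 and t2\<close>
  define t1 t2 where "t1 = (c / m) powr (- 1 / (2 * \<mu>))" and "t2 = (c / M) powr (- 1 / (2 * \<mu>))"
  have cm: "c / m > 0" "c / M > 0" using assms mM by auto
  then have "t1 > 0" "t2 > 0" by (auto simp: t1_def t2_def)
  have "c / M \<le> c / m" using assms mM by (simp add: divide_left_mono)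
  then have "t1 \<le> t2" unfolding t1_def t2_def
    using mu_pos cm by (intro powr_mono2') auto
  have powr_inverse: "(d powr (- 1 / (2 * \<mu>))) powr (- 2 * \<mu>) = d" if "d > 0" for d :: real
    using that mu_pos by (simp add: powr_powr)
  have "psib t1 (\<theta> - t1) \<le> - c"
    using bounds[OF \<open>t1 > 0\<close>, of "\<theta> - t1"] powr_inverse[OF cm(1)] mM by (simp add: t1_def)
  moreover have "- c \<le> psib t2 (\<theta> - t2)"
    using bounds[OF \<open>t2 > 0\<close>, of "\<theta> - t2"] powr_inverse[OF cm(2)] mM by (simp add: t2_def)
  moreover have "continuous_on {t1..t2} (\<lambda>t. psib t (\<theta> - t))"
    using \<open>t1 > 0\<close>
    by (intro continuous_on_compose2[OF continuous_on_psib, where f = "\<lambda>t. (t, \<theta> - t)", simplified])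
       (auto intro!: continuous_intros)
  ultimately obtain t where "t1 \<le> t" "psib t (\<theta> - t) = - c"
    using IVT'[of "\<lambda>t. psib t (\<theta> - t)" t1 "- c" t2] \<open>t1 \<le> t2\<close> by blast
  then show thesis using that[of t] \<open>t1 > 0\<close> by simp
qed

definition radius :: "real \<times> real \<Rightarrow> real" where
  "radius x = sqrt (- case_prod psib x / \<mu>)"

lemma radius_pos: "x \<in> half_plane \<Longrightarrow> radius x > 0"
  using psib_neg mu_pos by (auto simp: radius_def divide_neg_pos)

lemma Tmap_polar:
  assumes "x \<in> half_plane"
  shows "Tmap \<mu> psib x = (radius x * cos (fst x + snd x), radius x * sin (fst x + snd x))"
proof -
  obtain b p where x: "x = (b, p)" and "b > 0" using assms by auto
  then have "- psib b p / \<mu> > 0"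
    using psib_neg mu_pos by (simp add: divide_neg_pos)
  moreover have "exp (ln q / 2) = sqrt q" if "q > 0" for q :: real
    using that by (simp add: powr_half_sqrt[symmetric] powr_def)
  ultimately show ?thesis
    by (simp add: x Tmap_def radius_def)
qed

lemma Tmap_eq_iff:
  assumes "x \<in> half_plane" "y \<in> half_plane"
  shows "Tmap \<mu> psib x = Tmap \<mu> psib y \<longleftrightarrow>
    fst x = fst y \<and> (\<exists>k::int. snd x - snd y = 2 * pi * of_int k)"
proof -
  obtain b p b' p' where xy: "x = (b, p)" "y = (b', p')" and "b > 0" "b' > 0"
    using assms by auto
  have "radius x = radius y \<longleftrightarrow> psib b p = psib b' p'"
    using mu_pos by (simp add: radius_def xy)
  then have "Tmap \<mu> psib x = Tmap \<mu> psib y \<longleftrightarrow>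
      psib b p = psib b' p' \<and> (\<exists>k::int. b + p = b' + p' + 2 * pi * k)"
    using polar_eq_iff[OF radius_pos[OF assms(1)] radius_pos[OF assms(2)]] assms
    by (simp add: Tmap_polar xy)
  also have "\<dots> \<longleftrightarrow> b = b' \<and> (\<exists>k::int. p - p' = 2 * pi * k)"
  proof
    assume "psib b p = psib b' p' \<and> (\<exists>k::int. b + p = b' + p' + 2 * pi * k)"
    then obtain k :: int where eq: "psib b p = psib b' p'" and k: "b + p = b' + p' + 2 * pi * k"
      by blast
    have "psib b' ((b + p) - b') = psib b' p'"
      using psib_periodic_int[OF \<open>b' > 0\<close>, of p' k] k by (simp add: algebra_simps)
    then have "psib b ((b + p) - b) = psib b' ((b + p) - b')" using eq by simp
    then have "b' = b"
      by (rule strict_mono_on_eqD[OF psib_antidiagonal_strict_mono[of "b + p"]])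
         (use \<open>b > 0\<close> \<open>b' > 0\<close> in auto)
    then show "b = b' \<and> (\<exists>k::int. p - p' = 2 * pi * k)" using k by auto
  next
    assume "b = b' \<and> (\<exists>k::int. p - p' = 2 * pi * k)"
    then obtain k :: int where "b = b'" "p = p' + 2 * pi * k"
      by (auto simp: algebra_simps)
    then show "psib b p = psib b' p' \<and> (\<exists>k::int. b + p = b' + p' + 2 * pi * k)"
      using psib_periodic_int[OF \<open>b' > 0\<close>, of p' k] by auto
  qed
  finally show ?thesis by (simp add: xy)
qed

lemma Tmap_image: "Tmap \<mu> psib ` half_plane = UNIV - {0}"
proof (intro equalityI subsetI)
  fix w assume "w \<in> Tmap \<mu> psib ` half_plane"
  then obtain x where x: "x \<in> half_plane" "w = Tmap \<mu> psib x" by blast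
  then show "w \<in> UNIV - {0}"
    using radius_pos[OF x(1)] by (simp add: Tmap_polar polar_eq_zero_iff)
next
  fix w :: "real \<times> real" assume "w \<in> UNIV - {0}"
  then obtain r \<theta> where "r > 0" and w: "w = (r * cos \<theta>, r * sin \<theta>)"
    using polar_exists by blast
  obtain t where "t > 0" and t: "psib t (\<theta> - t) = - (\<mu> * r\<^sup>2)"
    using psib_antidiagonal_attains[of "\<mu> * r\<^sup>2" \<theta>] mu_pos \<open>r > 0\<close> by auto
  have "radius (t, \<theta> - t) = r"
    using t mu_pos \<open>r > 0\<close> by (simp add: radius_def)
  then have "Tmap \<mu> psib (t, \<theta> - t) = w"
    using \<open>t > 0\<close> by (simp add: Tmap_polar w)
  then show "w \<in> Tmap \<mu> psib ` half_plane" using \<open>t > 0\<close> by force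
qed

definition radius_deriv :: "real \<times> real \<Rightarrow> real \<times> real \<Rightarrow> real" where
  "radius_deriv x h = - D x h / (2 * \<mu> * radius x)"

lemma radius_has_derivative:
  assumes "x \<in> half_plane"
  shows "(radius has_derivative radius_deriv x) (at x)"
proof -
  have "- case_prod psib x / \<mu> > 0"
    using assms psib_neg mu_pos by (auto simp: divide_neg_pos)
  then show ?thesis
    unfolding radius_def[abs_def] radius_deriv_def
    using mu_pos
    by (auto intro!: derivative_eq_intros psib_has_derivative[OF assms, unfolded split_beta']
        simp: divide_simps)
qed

lemma continuous_on_radius: "continuous_on half_plane radius"
  by (intro continuous_at_imp_continuous_on ballI has_derivative_continuous[OF radius_has_derivative])

definition Tmap_column :: "real \<times> real \<Rightarrow> real \<times> real \<Rightarrow> real \<times> real" where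
  "Tmap_column x v = polar_differential (radius x) (fst x + snd x) (radius_deriv x v) (fst v + snd v)"

lemma Tmap_has_derivative:
  assumes "x \<in> half_plane"
  shows "(Tmap \<mu> psib has_derivative
    blinfun_of_columns (Tmap_column x (1, 0)) (Tmap_column x (0, 1))) (at x)"
proof -
  have "((\<lambda>x. (radius x * cos (fst x + snd x), radius x * sin (fst x + snd x))) has_derivative
      (\<lambda>h. polar_differential (radius x) (fst x + snd x) (radius_deriv x h) (fst h + snd h))) (at x)"
    by (intro has_derivative_polar radius_has_derivative[OF assms]) (auto intro!: derivative_eq_intros)
  from has_derivative_blinfun_of_columns[OF this]
  show ?thesis unfolding Tmap_column_def
    by (rule has_derivative_transform_within_open[OF _ open_half_plane assms]) (simp add: Tmap_polar)
qed

lemma continuous_on_Tmap_column: "continuous_on half_plane (\<lambda>x. Tmap_column x v)"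
proof -
  have "2 * \<mu> * radius x \<noteq> 0" if "x \<in> half_plane" for x
    using radius_pos[OF that] mu_pos by simp
  then have "continuous_on half_plane (\<lambda>x. radius_deriv x v)"
    unfolding radius_deriv_def
    by (intro continuous_on_divide continuous_on_minus continuous_on_mult continuous_on_const
        continuous_on_radius blinfun.continuous_on[OF D_continuous] ballI)
  then show ?thesis
    unfolding Tmap_column_def polar_differential_def
    by (intro continuous_intros continuous_on_radius)
qed

lemma det_Tmap_columns:
  assumes "x \<in> half_plane"
  shows "det_columns (Tmap_column x (1, 0)) (Tmap_column x (0, 1)) = D x (-1, 1) / (2 * \<mu>)"
proof -
  have "det_columns (Tmap_column x (1, 0)) (Tmap_column x (0, 1))
      = radius x * (radius_deriv x (1, 0) - radius_deriv x (0, 1))"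
    by (simp add: Tmap_column_def det_polar_differential)
  also have "\<dots> = (D x (0, 1) - D x (1, 0)) / (2 * \<mu>)"
    using radius_pos[OF assms] mu_pos by (simp add: radius_deriv_def field_simps)
  also have "\<dots> = D x (-1, 1) / (2 * \<mu>)"
    by (simp flip: blinfun.diff_right)
  finally show ?thesis .
qed

lemma C1_on_Tmap: "C1_on half_plane (Tmap \<mu> psib)"
  unfolding C1_on_def
  by (intro exI[of _ "\<lambda>x. blinfun_of_columns (Tmap_column x (1, 0)) (Tmap_column x (0, 1))"]
      conjI ballI Tmap_has_derivative continuous_on_blinfun_of_columns continuous_on_Tmap_column)

lemma Tmap_local_inverse:
  assumes "z \<noteq> 0"
  shows "\<exists>U g. open U \<and> z \<in> U \<and> 0 \<notin> U \<and> C1_on U g \<and> g ` U \<subseteq> half_plane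
    \<and> (\<forall>w\<in>U. Tmap \<mu> psib (g w) = w)"
proof -
  have "z \<in> Tmap \<mu> psib ` half_plane" using assms Tmap_image by simp
  then obtain x0 where x0: "x0 \<in> half_plane" "Tmap \<mu> psib x0 = z" by blast
  have det: "det_columns (Tmap_column x (1, 0)) (Tmap_column x (0, 1)) \<noteq> 0"
    if "x \<in> half_plane" for x
    using det_Tmap_columns[OF that] mixed_neg[OF that] mu_pos by simp
  show ?thesis
  proof (rule C1_local_inverse_plane[OF open_half_plane x0(1) Tmap_has_derivative
        continuous_on_Tmap_column continuous_on_Tmap_column det])
    fix V g assume "open V" "Tmap \<mu> psib x0 \<in> V" "V \<subseteq> Tmap \<mu> psib ` half_plane"
      "C1_on V g" "g ` V \<subseteq> half_plane" "\<And>w. w \<in> V \<Longrightarrow> Tmap \<mu> psib (g w) = w"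
    moreover from \<open>V \<subseteq> Tmap \<mu> psib ` half_plane\<close> have "0 \<notin> V"
      using Tmap_image by auto
    ultimately show ?thesis
      using x0(2) by (intro exI[of _ V] exI[of _ g]) simp
  qed
qed

end

theorem proposition4p1:
  fixes \<mu> m M :: real and \<psi> psib :: "real \<Rightarrow> real \<Rightarrow> real"
  assumes mu_pos: "\<mu> > 0"
    and periodic: "\<And>b p. b > 0 \<Longrightarrow> \<psi> b (p + 2 * pi) = \<psi> b p"
    and psib_deriv: "\<And>b p. b > 0 \<Longrightarrow> ((\<lambda>t. \<psi> t p) has_real_derivative psib b p) (at b)"
    and psib_C1: "C1_on ({0<..} \<times> UNIV) (\<lambda>(b, p). psib b p)"
    and mM: "0 < m" "m \<le> M"
    and bounds: "\<And>b p. b > 0 \<Longrightarrow>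
         - M * b powr (- 2 * \<mu>) \<le> psib b p \<and> psib b p \<le> - m * b powr (- 2 * \<mu>)"
    and mixed_neg: "\<And>b p. b > 0 \<Longrightarrow>
         frechet_derivative (\<lambda>(b, p). psib b p) (at (b, p)) (-1, 1) < 0"
  shows "C1_on ({0<..} \<times> UNIV) (Tmap \<mu> psib)
    \<and> (\<forall>x\<in>{0<..} \<times> UNIV. \<forall>y\<in>{0<..} \<times> UNIV.
          Tmap \<mu> psib x = Tmap \<mu> psib y \<longleftrightarrow>
            fst x = fst y \<and> (\<exists>k::int. snd x - snd y = 2 * pi * of_int k))
    \<and> Tmap \<mu> psib ` ({0<..} \<times> UNIV) = UNIV - {0}
    \<and> (\<forall>z. z \<noteq> 0 \<longrightarrow> (\<exists>U g. open U \<and> z \<in> U \<and> 0 \<notin> U \<and> C1_on U g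
          \<and> g ` U \<subseteq> {0<..} \<times> UNIV \<and> (\<forall>w\<in>U. Tmap \<mu> psib (g w) = w)))"
proof -
  obtain D :: "real \<times> real \<Rightarrow> (real \<times> real) \<Rightarrow>\<^sub>L real"
    where der: "\<And>x. x \<in> half_plane \<Longrightarrow> (case_prod psib has_derivative D x) (at x)"
    and cont: "continuous_on half_plane D"
    using psib_C1 unfolding C1_on_def by blast
  interpret twist_coordinates \<mu> m M psib D
  proof
    show "psib b (p + 2 * pi) = psib b p" if "b > 0" for b p
      by (rule partial_derivative_periodic[where f = \<psi>, OF periodic psib_deriv that])
    show "D x (-1, 1) < 0" if x: "x \<in> half_plane" for x
    proof -
      obtain b p where "x = (b, p)" "b > 0" using x by auto
      then show ?thesis
        using mixed_neg frechet_derivative_at[OF der[OF x]] by simp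
    qed
  qed (use mu_pos der cont mM bounds in auto)
  show ?thesis
    using C1_on_Tmap Tmap_eq_iff Tmap_image Tmap_local_inverse by blast
qed

end
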